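(* Let $G$ be a finite affine primitive permutation group with point stabilizer $H$ and minimal normal subgroup $V\cong C_p^n$, written additively as an $\mathbb F_p$-vector space. Let $h\in H$ and $v\in V$, set $w:=v^{h^{-1}}-v$ and $k:=\lceil\log_2 p\rceil$. Then the cyclic subgroup $\langle w\rangle$ is contained in a setwise product of $k+1$ conjugates of $H$.
   Context: A finite primitive permutation group $G$ is affine if it has an abelian minimal normal subgroup; this is then the unique minimal normal subgroup $V\cong C_p^n$ ($p$ prime), $G=VH$ where $H$ is a point stabilizer, and $H$ acts on $V$ by conjugation $v^{h}=h^{-1}vh$, irreducibly, as a group of linear transformations. *)

theory Defs
  imports "HOL-Algebra.Algebra" "HOL-Analysis.Analysis"
begin

definition is_block :: "('a, 'c) monoid_scheme \<Rightarrow> 'b set \<Rightarrow> ('a \<Rightarrow> 'b \<Rightarrow> 'b) \<Rightarrow> 'b set \<Rightarrow> bool" where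
  "is_block G E \<phi> B \<longleftrightarrow> B \<subseteq> E \<and>
     (\<forall>g \<in> carrier G. \<phi> g ` B = B \<or> \<phi> g ` B \<inter> B = {})"

definition primitive_action :: "('a, 'c) monoid_scheme \<Rightarrow> 'b set \<Rightarrow> ('a \<Rightarrow> 'b \<Rightarrow> 'b) \<Rightarrow> bool" where
  "primitive_action G E \<phi> \<longleftrightarrow> transitive_action G E \<phi> \<and>
     (\<forall>B. is_block G E \<phi> B \<longrightarrow> B = {} \<or> (\<exists>x. B = {x}) \<or> B = E)"

definition minimal_normal :: "'a set \<Rightarrow> ('a, 'c) monoid_scheme \<Rightarrow> bool" where
  "minimal_normal V G \<longleftrightarrow> V \<lhd> G \<and> V \<noteq> {\<one>\<^bsub>G\<^esub>} \<and>
     (\<forall>N. N \<lhd> G \<longrightarrow> N \<subseteq> V \<longrightarrow> N = {\<one>\<^bsub>G\<^esub>} \<or> N = V)"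

definition abelian_set :: "('a, 'c) monoid_scheme \<Rightarrow> 'a set \<Rightarrow> bool" where
  "abelian_set G V \<longleftrightarrow> (\<forall>x \<in> V. \<forall>y \<in> V. x \<otimes>\<^bsub>G\<^esub> y = y \<otimes>\<^bsub>G\<^esub> x)"

definition conj_set :: "('a, 'c) monoid_scheme \<Rightarrow> 'a set \<Rightarrow> 'a \<Rightarrow> 'a set" where
  "conj_set G H g = (inv\<^bsub>G\<^esub> g) <#\<^bsub>G\<^esub> H #>\<^bsub>G\<^esub> g"

fun conj_prod :: "('a, 'c) monoid_scheme \<Rightarrow> 'a set \<Rightarrow> 'a list \<Rightarrow> 'a set" where
  "conj_prod G H [] = {\<one>\<^bsub>G\<^esub>}"
| "conj_prod G H (g # gs) = conj_set G H g <#>\<^bsub>G\<^esub> conj_prod G H gs"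

end

theory Submission
  imports Defs
begin

text \<open>Write \<open>w = (h v h\<inverse>) v\<inverse>\<close>. Since \<open>V\<close> is abelian and normal, conjugating \<open>h\<close> by
\<open>v\<^sup>a\<close> gives \<open>w\<^sup>a h\<close>, so the conjugate \<open>H\<^bsup>v\<^sup>a\<^esup>\<close> contains both \<open>w\<^sup>a h\<close> and \<open>h\<inverse> w\<^sup>-\<^sup>a\<close>.
Multiplying on the left by \<open>H\<^bsup>v\<^sup>N\<^esup>\<close> with \<open>N = 2\<^sup>n\<close> therefore doubles the range of powers
\<open>w\<^sup>j\<close> that a product of conjugates is known to contain: \<open>w\<^sup>j = (w\<^sup>N h)(h\<inverse> w\<^sup>j\<^sup>-\<^sup>N)\<close>.
After \<open>k + 1\<close> doublings all \<open>w\<^sup>j\<close> with \<open>j < 2\<^sup>k\<close> are reached, and these exhaust \<open>\<langle>w\<rangle>\<close>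
because \<open>w\<^sup>p = 1\<close> and \<open>p \<le> 2\<^sup>k\<close>.\<close>

fun dyadic_powers :: "('a, 'c) monoid_scheme \<Rightarrow> 'a \<Rightarrow> nat \<Rightarrow> 'a list" where
  "dyadic_powers G v 0 = []"
| "dyadic_powers G v (Suc n) = v [^]\<^bsub>G\<^esub> ((2::nat) ^ n) # dyadic_powers G v n"

lemma length_dyadic_powers [simp]: "length (dyadic_powers G v n) = n"
  by (induction n) auto

lemma (in monoid) dyadic_powers_carrier:
  "v \<in> carrier G \<Longrightarrow> set (dyadic_powers G v n) \<subseteq> carrier G"
  by (induction n) auto

lemma (in group) inv_mult_cancel_left [simp]:
  "x \<in> carrier G \<Longrightarrow> y \<in> carrier G \<Longrightarrow> inv x \<otimes> (x \<otimes> y) = y"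
  by (simp flip: m_assoc)

lemma (in group) mult_inv_cancel_left [simp]:
  "x \<in> carrier G \<Longrightarrow> y \<in> carrier G \<Longrightarrow> x \<otimes> (inv x \<otimes> y) = y"
  by (simp flip: m_assoc)

lemma set_mult_memI: "x \<in> A \<Longrightarrow> y \<in> B \<Longrightarrow> x \<otimes>\<^bsub>G\<^esub> y \<in> A <#>\<^bsub>G\<^esub> B"
  unfolding set_mult_def by blast

lemma conj_set_memI: "x \<in> H \<Longrightarrow> inv\<^bsub>G\<^esub> g \<otimes>\<^bsub>G\<^esub> x \<otimes>\<^bsub>G\<^esub> g \<in> conj_set G H g"
  unfolding conj_set_def r_coset_def l_coset_def by blast

lemma (in group) one_mem_conj_set:
  assumes "subgroup H G" "g \<in> carrier G"
  shows "\<one> \<in> conj_set G H g"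
  using conj_set_memI[OF subgroup.one_closed[OF assms(1)], of G g] assms(2) by simp

lemma (in group) mem_set_mult_if_one_mem:
  assumes "\<one> \<in> A" "y \<in> B" "y \<in> carrier G"
  shows "y \<in> A <#> B"
  using set_mult_memI[OF assms(1,2), of G] assms(3) by simp

lemma (in group) generate_singleton_subset_pows_below:
  fixes p :: nat
  assumes a: "a \<in> carrier G" and "0 < p" and "a [^] p = \<one>"
  shows "generate G {a} \<subseteq> {a [^] j | j. j < p}"
proof
  fix x assume "x \<in> generate G {a}"
  then obtain i :: int where x: "x = a [^] i" using generate_pow[OF a] by blast
  have "int (ord a) dvd int p" using assms by (simp add: pow_eq_id)
  moreover have "int p dvd i - i mod int p" by (simp add: minus_mod_eq_mult_div)
  ultimately have "int (ord a) dvd i - i mod int p" by (rule dvd_trans)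
  moreover define j where "j = nat (i mod int p)"
  moreover have "int j = i mod int p" "j < p" using \<open>0 < p\<close> by (auto simp: j_def nat_less_iff)
  ultimately have "x = a [^] j" unfolding x using a by (metis int_pow_eq dvd_diff_commute int_pow_int)
  then show "x \<in> {a [^] j | j. j < p}" using \<open>j < p\<close> by blast
qed

lemma le_two_pow_ceiling_log2:
  assumes "0 < p"
  shows "p \<le> (2::nat) ^ nat \<lceil>log 2 (real p)\<rceil>"
proof -
  have ceiling: "log 2 (real p) \<le> real (nat \<lceil>log 2 (real p)\<rceil>)"
    by linarith
  have "real p = 2 powr log 2 (real p)" using assms by simp
  also have "\<dots> \<le> 2 powr real (nat \<lceil>log 2 (real p)\<rceil>)"
    using ceiling by (intro powr_mono) auto
  finally show ?thesis by (simp add: powr_realpow flip: of_nat_le_iff)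
qed

locale abelian_normal_conjugation = group G for G (structure) +
  fixes V H h v
  assumes normal: "V \<lhd> G" and abelian: "abelian_set G V"
    and subgroup: "subgroup H G" and h_mem: "h \<in> H" and v_mem: "v \<in> V"
begin

definition w :: 'a where "w = (h \<otimes> v \<otimes> inv h) \<otimes> inv v"

lemma V_subgroup: "subgroup V G"
  using normal by (rule normal_imp_subgroup)

lemma V_carrier: "x \<in> V \<Longrightarrow> x \<in> carrier G"
  using V_subgroup by (rule subgroup.mem_carrier)

lemma V_comm: "x \<in> V \<Longrightarrow> y \<in> V \<Longrightarrow> x \<otimes> y = y \<otimes> x"
  using abelian by (simp add: abelian_set_def)

lemma V_pow_closed: "x \<in> V \<Longrightarrow> x [^] (n::nat) \<in> V"
  using subgroup_int_pow_closed[OF V_subgroup, of x "int n"] by (simp add: int_pow_int)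

lemma h_carrier [simp]: "h \<in> carrier G"
  using subgroup h_mem by (rule subgroup.mem_carrier)

lemma v_carrier [simp]: "v \<in> carrier G"
  using v_mem by (rule V_carrier)

lemma w_mem: "w \<in> V"
  unfolding w_def
  by (intro subgroup.m_closed[OF V_subgroup] subgroup.m_inv_closed[OF V_subgroup]
      normal.inv_op_closed2[OF normal] h_carrier v_mem)

lemma w_carrier [simp]: "w \<in> carrier G"
  using w_mem by (rule V_carrier)

lemma conj_h_by_v: "inv v \<otimes> h \<otimes> v = w \<otimes> h"
proof -
  have "h \<otimes> v \<otimes> inv h \<in> V" by (rule normal.inv_op_closed2[OF normal h_carrier v_mem])
  moreover have "inv v \<in> V" using v_mem by (rule subgroup.m_inv_closed[OF V_subgroup])
  ultimately have "w = inv v \<otimes> (h \<otimes> v \<otimes> inv h)" unfolding w_def by (rule V_comm)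
  then show ?thesis by (simp add: m_assoc)
qed

lemma conj_h_by_pow: "inv (v [^] (a::nat)) \<otimes> h \<otimes> v [^] a = w [^] a \<otimes> h"
proof (induction a)
  case 0
  show ?case by simp
next
  case (Suc a)
  have w_v: "inv v \<otimes> w [^] a \<otimes> v = w [^] a"
    using V_comm[OF V_pow_closed[OF w_mem] v_mem, of a] by (simp add: m_assoc)
  have "inv (v [^] Suc a) \<otimes> h \<otimes> v [^] Suc a = inv v \<otimes> (inv (v [^] a) \<otimes> h \<otimes> v [^] a) \<otimes> v"
    by (simp add: inv_mult_group m_assoc)
  also have "\<dots> = (inv v \<otimes> w [^] a \<otimes> v) \<otimes> (inv v \<otimes> h \<otimes> v)"
    unfolding Suc.IH by (simp add: m_assoc)
  also have "\<dots> = w [^] Suc a \<otimes> h"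
    unfolding w_v conj_h_by_v by (simp add: m_assoc)
  finally show ?case .
qed

lemma conj_inv_h_by_pow: "inv (v [^] (a::nat)) \<otimes> inv h \<otimes> v [^] a = inv h \<otimes> inv (w [^] a)"
proof -
  have "inv (v [^] a) \<otimes> inv h \<otimes> v [^] a = inv (inv (v [^] a) \<otimes> h \<otimes> v [^] a)"
    by (simp add: inv_mult_group m_assoc)
  then show ?thesis by (simp add: conj_h_by_pow inv_mult_group)
qed

abbreviation dyadic_prod :: "nat \<Rightarrow> 'a set" where
  "dyadic_prod n \<equiv> conj_prod G H (dyadic_powers G v n)"

lemma dyadic_prod_Suc:
  "dyadic_prod (Suc n) = conj_set G H (v [^] ((2::nat) ^ n)) <#> dyadic_prod n"
  by simp

lemma w_pow_mem_dyadic_prod_Suc: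
  fixes n j :: nat
  assumes IH_w: "\<And>j::nat. 2 * j < 2 ^ n \<Longrightarrow> w [^] j \<in> dyadic_prod n"
    and IH_h: "\<And>r::nat. 0 < r \<Longrightarrow> 2 * r \<le> 2 ^ n \<Longrightarrow> inv h \<otimes> inv (w [^] r) \<in> dyadic_prod n"
    and j: "2 * j < 2 ^ Suc n"
  shows "w [^] j \<in> dyadic_prod (Suc n)"
proof (cases "2 * j < 2 ^ n")
  case True
  then show ?thesis unfolding dyadic_prod_Suc
    by (intro mem_set_mult_if_one_mem one_mem_conj_set subgroup IH_w) auto
next
  case False
  define r where "r = 2 ^ n - j"
  have r: "0 < r" "2 * r \<le> 2 ^ n" "2 ^ n = j + r" using j False unfolding r_def by auto
  have "inv (v [^] ((2::nat) ^ n)) \<otimes> h \<otimes> v [^] ((2::nat) ^ n) \<otimes> (inv h \<otimes> inv (w [^] r))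
      \<in> dyadic_prod (Suc n)"
    unfolding dyadic_prod_Suc by (intro set_mult_memI conj_set_memI h_mem IH_h r)
  also have "inv (v [^] ((2::nat) ^ n)) \<otimes> h \<otimes> v [^] ((2::nat) ^ n) \<otimes> (inv h \<otimes> inv (w [^] r))
      = w [^] j"
    unfolding conj_h_by_pow r(3) by (simp add: nat_pow_mult m_assoc flip: nat_pow_mult)
  finally show ?thesis .
qed

lemma inv_h_mem_dyadic_prod_Suc:
  fixes n r :: nat
  assumes IH_w: "\<And>j::nat. 2 * j < 2 ^ n \<Longrightarrow> w [^] j \<in> dyadic_prod n"
    and IH_h: "\<And>r::nat. 0 < r \<Longrightarrow> 2 * r \<le> 2 ^ n \<Longrightarrow> inv h \<otimes> inv (w [^] r) \<in> dyadic_prod n"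
    and r: "0 < r" "2 * r \<le> 2 ^ Suc n"
  shows "inv h \<otimes> inv (w [^] r) \<in> dyadic_prod (Suc n)"
proof (cases "2 * r \<le> 2 ^ n")
  case True
  then show ?thesis unfolding dyadic_prod_Suc
    by (intro mem_set_mult_if_one_mem one_mem_conj_set subgroup IH_h r) auto
next
  case False
  define m where "m = 2 ^ n - r"
  have m: "2 * m < 2 ^ n" "2 ^ n = m + r" using r False unfolding m_def by auto
  have "inv (v [^] ((2::nat) ^ n)) \<otimes> inv h \<otimes> v [^] ((2::nat) ^ n) \<otimes> w [^] m
      \<in> dyadic_prod (Suc n)"
    unfolding dyadic_prod_Suc
    by (intro set_mult_memI conj_set_memI subgroup.m_inv_closed[OF subgroup] h_mem IH_w m)
  also have "inv (v [^] ((2::nat) ^ n)) \<otimes> inv h \<otimes> v [^] ((2::nat) ^ n) \<otimes> w [^] m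
      = inv h \<otimes> inv (w [^] r)"
    unfolding conj_inv_h_by_pow m(2) by (simp add: inv_mult_group m_assoc flip: nat_pow_mult)
  finally show ?thesis .
qed

lemma dyadic_prod_mem:
  fixes n :: nat
  shows "(\<forall>j::nat. 2 * j < 2 ^ n \<longrightarrow> w [^] j \<in> dyadic_prod n) \<and>
    (\<forall>r::nat. 0 < r \<and> 2 * r \<le> 2 ^ n \<longrightarrow> inv h \<otimes> inv (w [^] r) \<in> dyadic_prod n)"
proof (induction n)
  case 0
  show ?case by auto
next
  case (Suc n)
  then show ?case
    using w_pow_mem_dyadic_prod_Suc inv_h_mem_dyadic_prod_Suc by blast
qed

lemma generate_w_subset_dyadic_prod:
  fixes p k :: nat
  assumes "0 < p" "p \<le> 2 ^ k" "w [^] p = \<one>"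
  shows "generate G {w} \<subseteq> dyadic_prod (Suc k)"
proof -
  have "w [^] j \<in> dyadic_prod (Suc k)" if "j < p" for j :: nat
  proof -
    have "2 * j < 2 ^ Suc k" using that assms(2) by simp
    then show ?thesis using dyadic_prod_mem by blast
  qed
  then show ?thesis
    using generate_singleton_subset_pows_below[OF w_carrier assms(1,3)] by blast
qed

end

theorem lemma17:
  fixes G :: "('a, 'c) monoid_scheme" and \<Omega> :: "'b set" and \<phi> :: "'a \<Rightarrow> 'b \<Rightarrow> 'b"
    and \<omega> :: 'b and V :: "'a set" and p :: nat and h v :: 'a
  assumes "group G"
    and "finite \<Omega>"
    and "faithful_action G \<Omega> \<phi>"
    and "primitive_action G \<Omega> \<phi>"
    and "\<omega> \<in> \<Omega>"
    and "minimal_normal V G"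
    and "abelian_set G V"
    and "Factorial_Ring.prime p"
    and "\<forall>x \<in> V. x [^]\<^bsub>G\<^esub> p = \<one>\<^bsub>G\<^esub>"
    and "h \<in> stabilizer G \<phi> \<omega>"
    and "v \<in> V"
  shows "\<exists>gs. length gs = nat \<lceil>log 2 (real p)\<rceil> + 1 \<and> set gs \<subseteq> carrier G \<and>
           generate G {(h \<otimes>\<^bsub>G\<^esub> v \<otimes>\<^bsub>G\<^esub> inv\<^bsub>G\<^esub> h) \<otimes>\<^bsub>G\<^esub> inv\<^bsub>G\<^esub> v}
             \<subseteq> conj_prod G (stabilizer G \<phi> \<omega>) gs"
proof -
  define k where "k = nat \<lceil>log 2 (real p)\<rceil>"
  have "subgroup (stabilizer G \<phi> \<omega>) G"
    using assms(3,5) by (intro group_action.stabilizer_subgroup faithful_action.axioms(1))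
  moreover have "V \<lhd> G" using assms(6) by (simp add: minimal_normal_def)
  ultimately interpret abelian_normal_conjugation G V "stabilizer G \<phi> \<omega>" h v
    by (intro abelian_normal_conjugation.intro abelian_normal_conjugation_axioms.intro assms(1,7,10,11))
  have "0 < p" using assms(8) by (simp add: prime_gt_0_nat)
  moreover have "p \<le> 2 ^ k" unfolding k_def using \<open>0 < p\<close> by (rule le_two_pow_ceiling_log2)
  moreover have "w [^]\<^bsub>G\<^esub> p = \<one>\<^bsub>G\<^esub>" using assms(9) w_mem by blast
  ultimately have "generate G {w} \<subseteq> dyadic_prod (Suc k)"
    by (rule generate_w_subset_dyadic_prod)
  then show ?thesis
    unfolding w_def k_def
    by (intro exI[of _ "dyadic_powers G v (Suc k)"] conjI dyadic_powers_carrier v_carrier)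
      (simp_all add: k_def)
qed

end
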